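(* Let $H = (V,E)$ be a hypertree with $|V| = n$ such that $|e|$ is prime for each edge $e \in E$. Fix an ordering of the edges $E = \{e_1, \ldots, e_k\}$ with $|(e_{1} \cup \cdots \cup e_{i})\cap e_{i+1}| = 1$ for all $1 \leq i < k$, and fix a cyclic permutation $c_i: e_i\rightarrow e_i$ of each edge $e_i$. Then $$X_H = \sum_{\pi} F_{\mathrm{Des}_H(\pi)},$$ the sum over all bijections $\pi: V \to [n]$, where $\mathrm{Des}_H(\pi)$ is the set of $H$-descents of $\pi$ with respect to the chosen edge-ordering and cyclic permutations.
   Context: A hypergraph is a pair $H=(V,E)$ with $V$ finite and $E$ a family of subsets of $V$ with $|e|>1$. A path is a sequence $v_1, e_1, v_2, \ldots, e_m, v_{m+1}$ with $e_i \in E$, $v_i, v_{i+1} \in e_i$, edges distinct and vertices distinct except that $v_1 = v_{m+1}$ is allowed; if $v_1 = v_{m+1}$ and $m>1$ it is a cycle. A hypertree is a connected hypergraph with no cycles; between any two distinct vertices there is a unique path. $H$-descents: for a bijection $\pi: V \to [n]$ and $i \in [n-1]$, let $\pi^{-1}(i) = v_1, e_{j_1}, v_2, \ldots, e_{j_l}, v_{l+1} = \pi^{-1}(i+1)$ be the unique path, and let $j_r = \min(j_1,\ldots,j_l)$; then $i \in \mathrm{Des}_H(\pi)$ iff $\pi(c_{j_r}(v_r)) > \pi(c_{j_r}(v_{r+1}))$. A coloring $\chi: V \to \mathbb{P}=\{1,2,\ldots\}$ is proper if it is nonconstant on every edge; $X_H = \sum_\chi \prod_{v\in V} x_{\chi(v)}$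 over proper colorings. For $S \subseteq [n-1]$, $F_S = \sum x_{i_1}\cdots x_{i_n}$ over $i_1 \le \cdots \le i_n$ in $\mathbb{P}$ with $i_j < i_{j+1}$ whenever $j \in S$. *)

theory Defs
  imports "HOL-Combinatorics.Permutations" "HOL-Library.FuncSet"
          "HOL-Computational_Algebra.Primes"
begin

definition hypergraph :: "'v set \<Rightarrow> 'v set set \<Rightarrow> bool" where
  "hypergraph V E \<longleftrightarrow> finite V \<and> (\<forall>f\<in>E. f \<subseteq> V \<and> card f > 1)"

definition hpath :: "'v set set \<Rightarrow> 'v list \<Rightarrow> 'v set list \<Rightarrow> bool" where
  "hpath E vs es \<longleftrightarrow>
     length vs = length es + 1 \<and> distinct es \<and> set es \<subseteq> E \<and>
     (\<forall>i<length es. vs ! i \<in> es ! i \<and> vs ! (i+1) \<in> es ! i) \<and>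
     (\<forall>i j. i < j \<and> j < length vs \<and> vs ! i = vs ! j \<longrightarrow> i = 0 \<and> j = length es)"

definition hcycle :: "'v set set \<Rightarrow> 'v list \<Rightarrow> 'v set list \<Rightarrow> bool" where
  "hcycle E vs es \<longleftrightarrow> hpath E vs es \<and> hd vs = last vs \<and> length es > 1"

definition hconnected :: "'v set \<Rightarrow> 'v set set \<Rightarrow> bool" where
  "hconnected V E \<longleftrightarrow>
     (\<forall>u\<in>V. \<forall>w\<in>V. \<exists>vs es. hpath E vs es \<and> hd vs = u \<and> last vs = w)"

definition hypertree :: "'v set \<Rightarrow> 'v set set \<Rightarrow> bool" where
  "hypertree V E \<longleftrightarrow> hypergraph V E \<and> hconnected V E \<and> \<not> (\<exists>vs es. hcycle E vs es)"

definition cyclic_perm :: "('v \<Rightarrow> 'v) \<Rightarrow> 'v set \<Rightarrow> bool" where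
  "cyclic_perm c f \<longleftrightarrow> c permutes f \<and> (\<forall>x\<in>f. \<forall>y\<in>f. \<exists>m. (c ^^ m) x = y)"

definition H_descents ::
  "'v set \<Rightarrow> 'v set set \<Rightarrow> (nat \<Rightarrow> 'v set) \<Rightarrow> nat \<Rightarrow> (nat \<Rightarrow> 'v \<Rightarrow> 'v) \<Rightarrow> ('v \<Rightarrow> nat) \<Rightarrow> nat set"
where
  "H_descents V E e k c \<pi> =
     {i \<in> {1..<card V}.
        let (vs, es) = (THE p. hpath E (fst p) (snd p) \<and>
                               hd (fst p) = inv_into V \<pi> i \<and> last (fst p) = inv_into V \<pi> (i+1));
            idx = (\<lambda>f. THE j. j \<in> {1..k} \<and> e j = f);
            r = (ARG_MIN (\<lambda>t. idx (es ! t)) t. t < length es);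
            jr = idx (es ! r)
        in \<pi> (c jr (vs ! r)) > \<pi> (c jr (vs ! (r+1)))}"

text \<open>Coefficient of the monomial prod_a x_a^(\<alpha> a) in X_H (colours in P = {1,2,...}).\<close>
definition X_coeff :: "'v set \<Rightarrow> 'v set set \<Rightarrow> (nat \<Rightarrow> nat) \<Rightarrow> nat" where
  "X_coeff V E \<alpha> = card {\<chi> \<in> V \<rightarrow>\<^sub>E UNIV.
      (\<forall>v\<in>V. \<chi> v \<ge> 1) \<and> (\<forall>f\<in>E. \<exists>u\<in>f. \<exists>w\<in>f. \<chi> u \<noteq> \<chi> w) \<and>
      (\<forall>a. card {v\<in>V. \<chi> v = a} = \<alpha> a)}"

text \<open>Coefficient of the monomial prod_a x_a^(\<alpha> a) in F_S (n variables, sequences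
  i_1 \<le> ... \<le> i_n in P with strict ascent at positions in S).\<close>
definition F_coeff :: "nat \<Rightarrow> nat set \<Rightarrow> (nat \<Rightarrow> nat) \<Rightarrow> nat" where
  "F_coeff n S \<alpha> = card {s \<in> {1..n} \<rightarrow>\<^sub>E UNIV.
      (\<forall>j\<in>{1..n}. s j \<ge> 1) \<and>
      (\<forall>j. 1 \<le> j \<and> j < n \<longrightarrow> s j \<le> s (j+1) \<and> (j \<in> S \<longrightarrow> s j < s (j+1))) \<and>
      (\<forall>a. card {j\<in>{1..n}. s j = a} = \<alpha> a)}"

end

theory Submission
  imports Defs "HOL-Combinatorics.Orbits" "HOL-Library.Fun_Lexorder"
begin

text \<open>Both sides count pairs: the right-hand side counts pairs \<open>(\<pi>, s)\<close> of a labelling \<open>\<pi>\<close> and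
  a weakly increasing sequence of colours \<open>s\<close> that increases strictly at every \<open>H\<close>-descent of \<open>\<pi>\<close>,
  the left-hand side counts proper colourings, and \<open>(\<pi>, s) \<mapsto> s \<circ> \<pi>\<close> is a bijection.

  Two vertices \<open>a \<noteq> b\<close> of a hypertree are joined by a unique path. If \<open>e\<^sub>j\<close> is its edge of least
  index, the path enters and leaves \<open>e\<^sub>j\<close> at the gates of \<open>a\<close> and \<open>b\<close> onto \<open>e\<^sub>j\<close> (their nearest
  vertices in \<open>e\<^sub>j\<close>); this makes the relation "no \<open>H\<close>-descent from \<open>a\<close> to \<open>b\<close>" transitive. So on a block
  of equal colours \<open>\<pi>\<close> is forced: \<open>a\<close> comes before \<open>b\<close> iff the colours met by rotating the entry
  vertex with \<open>c\<^sub>j\<close> are lexicographically smaller than those met from the exit vertex. Since \<open>|e\<^sub>j|\<close>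
  is prime and \<open>e\<^sub>j\<close> is not monochromatic, these two colour words differ, so this order is total
  and \<open>\<pi>\<close> is recovered from \<open>s \<circ> \<pi>\<close>.\<close>

section \<open>Walks and simple paths in hypergraphs\<close>

fun hwalk :: "'v list \<Rightarrow> 'v set list \<Rightarrow> bool" where
  "hwalk [v] [] = True"
| "hwalk (v # w # vs) (f # fs) \<longleftrightarrow> v \<in> f \<and> w \<in> f \<and> hwalk (w # vs) fs"
| "hwalk _ _ = False"

lemma hwalk_iff:
  "hwalk vs es \<longleftrightarrow> length vs = Suc (length es) \<and> (\<forall>i<length es. vs ! i \<in> es ! i \<and> vs ! Suc i \<in> es ! i)"
proof (induction vs es rule: hwalk.induct)
  case (2 v w vs f fs)
  show ?case by (simp only: hwalk.simps 2) (auto simp: All_less_Suc2)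
qed auto

lemma hwalk_not_Nil: "hwalk vs es \<Longrightarrow> vs \<noteq> []"
  by (auto simp: hwalk_iff)

lemma hwalk_append:
  "hwalk xs es \<Longrightarrow> hwalk ys fs \<Longrightarrow> last xs = hd ys \<Longrightarrow> hwalk (xs @ tl ys) (es @ fs)"
proof (induction xs es rule: hwalk.induct)
  case (1 v)
  then show ?case by (cases ys) auto
qed auto

lemma hwalk_rev: "hwalk vs es \<Longrightarrow> hwalk (rev vs) (rev es)"
proof (induction vs es rule: hwalk.induct)
  case (2 v w vs f fs)
  then have "hwalk (rev (w # vs) @ tl [w, v]) (rev fs @ [f])"
    by (intro hwalk_append) auto
  then show ?case by simp
qed auto

lemma hwalk_take: "hwalk vs es \<Longrightarrow> t \<le> length es \<Longrightarrow> hwalk (take (Suc t) vs) (take t es)"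
  by (auto simp: hwalk_iff)

lemma hwalk_drop: "hwalk vs es \<Longrightarrow> t \<le> length es \<Longrightarrow> hwalk (drop t vs) (drop t es)"
  by (auto simp: hwalk_iff add.commute)

lemma last_append_tl: "xs \<noteq> [] \<Longrightarrow> ys \<noteq> [] \<Longrightarrow> last xs = hd ys \<Longrightarrow> last (xs @ tl ys) = last ys"
  by (cases ys) auto

lemma hwalk_join:
  assumes "hwalk ws fs" "hwalk ws' fs'" "last ws = last ws'"
  shows "hwalk (ws @ tl (rev ws')) (fs @ rev fs')"
    and "hd (ws @ tl (rev ws')) = hd ws" "last (ws @ tl (rev ws')) = hd ws'"
proof -
  have ne: "ws \<noteq> []" "ws' \<noteq> []" using assms hwalk_not_Nil by auto
  show "hwalk (ws @ tl (rev ws')) (fs @ rev fs')"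
    using assms by (intro hwalk_append hwalk_rev) (auto simp: hd_rev)
  show "hd (ws @ tl (rev ws')) = hd ws" using ne by simp
  show "last (ws @ tl (rev ws')) = hd ws'"
    using ne assms(3) last_append_tl[of ws "rev ws'"] by (simp add: hd_rev last_rev)
qed

definition simple_hpath :: "'v set set \<Rightarrow> 'v list \<Rightarrow> 'v set list \<Rightarrow> bool" where
  "simple_hpath E vs es \<longleftrightarrow> hwalk vs es \<and> distinct vs \<and> distinct es \<and> set es \<subseteq> E"

lemma simple_hpath_length: "simple_hpath E vs es \<Longrightarrow> length vs = Suc (length es)"
  by (simp add: simple_hpath_def hwalk_iff)

lemma simple_hpath_nth: "simple_hpath E vs es \<Longrightarrow> t < length es \<Longrightarrow> vs ! t \<in> es ! t \<and> vs ! Suc t \<in> es ! t"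
  by (simp add: simple_hpath_def hwalk_iff)

lemma simple_hpath_rev: "simple_hpath E vs es \<Longrightarrow> simple_hpath E (rev vs) (rev es)"
  by (auto simp: simple_hpath_def hwalk_rev)

lemma simple_hpath_drop:
  "simple_hpath E vs es \<Longrightarrow> t \<le> length es \<Longrightarrow> simple_hpath E (drop t vs) (drop t es)"
  by (auto simp: simple_hpath_def hwalk_drop dest: in_set_dropD)

lemma hpath_if_simple_hpath: "simple_hpath E vs es \<Longrightarrow> hpath E vs es"
  by (auto simp: simple_hpath_def hpath_def hwalk_iff nth_eq_iff_index_eq)

lemma simple_hpath_if_hpath:
  assumes "hpath E vs es" "hd vs \<noteq> last vs"
  shows "simple_hpath E vs es"
proof -
  have ne: "vs \<noteq> []" using assms by (auto simp: hpath_def)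
  have "vs ! i \<noteq> vs ! j" if "i < j" "j < length vs" for i j
  proof
    assume "vs ! i = vs ! j"
    then have "i = 0 \<and> j = length es" "length vs = Suc (length es)"
      using assms(1) that by (auto simp: hpath_def)
    then show False using assms(2) \<open>vs ! i = vs ! j\<close> ne by (simp add: hd_conv_nth last_conv_nth)
  qed
  then have "distinct vs" by (metis distinct_conv_nth linorder_neqE_nat)
  then show ?thesis using assms by (auto simp: simple_hpath_def hpath_def hwalk_iff)
qed

lemma simple_hpath_trivial:
  assumes "simple_hpath E vs es" "hd vs = last vs"
  shows "vs = [hd vs] \<and> es = []"
proof -
  have len: "length vs = Suc (length es)" and "distinct vs"
    using assms by (auto simp: simple_hpath_def hwalk_iff)
  have "vs ! 0 = vs ! length es"
    using assms(2) len hd_conv_nth[of vs] last_conv_nth[of vs] by force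
  then have "es = []" using \<open>distinct vs\<close> len nth_eq_iff_index_eq[of vs 0 "length es"] by simp
  then show ?thesis using len by (cases vs) auto
qed

lemma hcycle_close:
  assumes "simple_hpath E vs es" "es \<noteq> []" "f \<in> E" "f \<notin> set es" "hd vs \<in> f" "last vs \<in> f"
  shows "hcycle E (vs @ [hd vs]) (es @ [f])"
proof -
  have len: "length vs = Suc (length es)" and d: "distinct vs"
    using assms by (auto simp: simple_hpath_def hwalk_iff)
  have w: "hwalk (vs @ tl [last vs, hd vs]) (es @ [f])"
    using assms by (intro hwalk_append) (auto simp: simple_hpath_def)
  have hd0: "hd vs = vs ! 0" using len by (cases vs) auto
  have "i = 0 \<and> j = length vs" if "i < j" "j \<le> length vs" "(vs @ [hd vs]) ! i = (vs @ [hd vs]) ! j" for i j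
    using that d len unfolding hd0 by (cases "j = length vs")
      (auto simp: nth_append nth_eq_iff_index_eq split: if_splits)
  then have "hpath E (vs @ [hd vs]) (es @ [f])"
    using w assms len by (auto simp: hpath_def hwalk_iff simple_hpath_def less_Suc_eq_le)
  then show ?thesis using assms len by (cases vs) (auto simp: hcycle_def)
qed

lemma hwalk_skip_vertex_loop:
  assumes "hwalk vs es" "i < j" "j < length vs" "vs ! i = vs ! j"
  shows "hwalk (take (Suc i) vs @ drop (Suc j) vs) (take i es @ drop j es)"
proof -
  have len: "length vs = Suc (length es)" using assms(1) by (simp add: hwalk_iff)
  have "hwalk (take (Suc i) vs @ tl (drop j vs)) (take i es @ drop j es)"
    using assms len by (intro hwalk_append hwalk_take hwalk_drop)
      (auto simp: take_Suc_conv_app_nth hd_drop_conv_nth)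
  then show ?thesis by (simp add: drop_Suc tl_drop)
qed

lemma hwalk_skip_edge_loop:
  assumes "hwalk vs es" "i < j" "j < length es" "es ! i = es ! j"
  shows "hwalk (take (Suc i) vs @ drop (Suc j) vs) (take i es @ es ! i # drop (Suc j) es)"
proof -
  have len: "length vs = Suc (length es)" using assms(1) by (simp add: hwalk_iff)
  have d: "drop (Suc j) vs = vs ! Suc j # drop (Suc (Suc j)) vs"
    using assms len by (simp add: Cons_nth_drop_Suc)
  have "hwalk (drop (Suc j) vs) (drop (Suc j) es)" using assms len by (intro hwalk_drop) auto
  moreover have "vs ! i \<in> es ! i" "vs ! Suc j \<in> es ! i" using assms by (auto simp: hwalk_iff)
  ultimately have "hwalk (vs ! i # drop (Suc j) vs) (es ! i # drop (Suc j) es)"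
    by (subst d, subst (asm) d) simp
  then have "hwalk (take (Suc i) vs @ tl (vs ! i # drop (Suc j) vs)) (take i es @ es ! i # drop (Suc j) es)"
    using assms len by (intro hwalk_append hwalk_take) (auto simp: take_Suc_conv_app_nth)
  then show ?thesis by simp
qed

lemma hwalk_imp_simple_hpath:
  "hwalk vs es \<Longrightarrow> set es \<subseteq> E \<Longrightarrow> hd vs \<noteq> last vs \<Longrightarrow>
   \<exists>vs' es'. simple_hpath E vs' es' \<and> hd vs' = hd vs \<and> last vs' = last vs \<and> set es' \<subseteq> set es"
proof (induction "length vs" arbitrary: vs es rule: less_induct)
  case less
  have len: "length vs = Suc (length es)" using less.prems by (simp add: hwalk_iff)
  show ?case
  proof (cases "distinct vs \<and> distinct es")
    case True
    then show ?thesis using less.prems by (auto simp: simple_hpath_def)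
  next
    case False
    then obtain i j vs' es' where ij: "i < j" "j < length vs"
      and vs': "vs' = take (Suc i) vs @ drop (Suc j) vs" and w: "hwalk vs' es'" and es': "set es' \<subseteq> set es"
      and lastj: "Suc j = length vs \<Longrightarrow> vs ! i = last vs"
    proof (cases "distinct vs")
      case False
      then obtain i j where "i < j" "j < length vs" "vs ! i = vs ! j"
        by (metis distinct_conv_nth linorder_neqE_nat)
      moreover have "Suc j = length vs \<Longrightarrow> vs ! j = last vs"
        by (metis last_conv_nth diff_Suc_1 length_0_conv nat.distinct(1))
      ultimately show thesis
        using hwalk_skip_vertex_loop[OF less.prems(1)]
        by (intro that[of i j _ "take i es @ drop j es"])
          (auto simp: last_conv_nth dest: in_set_takeD in_set_dropD)
    next
      case True
      then obtain i j where "i < j" "j < length es" "es ! i = es ! j"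
        using False by (metis distinct_conv_nth linorder_neqE_nat)
      then show thesis
        using hwalk_skip_edge_loop[OF less.prems(1)] len
        by (intro that[of i j _ "take i es @ es ! i # drop (Suc j) es"])
          (auto dest: in_set_takeD in_set_dropD)
    qed
    have "hd vs' = hd vs" using vs' ij by (cases vs) auto
    moreover have "last vs' = last vs"
      using vs' ij lastj by (cases "Suc j = length vs") (auto simp: take_Suc_conv_app_nth)
    moreover have "length vs' < length vs" using vs' ij by simp
    ultimately show ?thesis
      using less.hyps[of vs' es'] w es' less.prems by (metis order_trans)
  qed
qed

definition hacyclic :: "'v set set \<Rightarrow> bool" where
  "hacyclic E \<longleftrightarrow> \<not> (\<exists>vs es. hcycle E vs es)"

lemma hacyclic_walk_avoiding_edge:
  assumes "hacyclic E" "f \<in> E" "hwalk ws fs" "set fs \<subseteq> E" "f \<notin> set fs" "hd ws \<in> f" "last ws \<in> f"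
  shows "hd ws = last ws"
proof (rule ccontr)
  assume ne: "hd ws \<noteq> last ws"
  then obtain vs es where P: "simple_hpath E vs es" "hd vs = hd ws" "last vs = last ws" "set es \<subseteq> set fs"
    using hwalk_imp_simple_hpath assms(3,4) by blast
  then have "es \<noteq> []" using ne simple_hpath_length[OF P(1)] by (cases vs) auto
  then have "hcycle E (vs @ [hd vs]) (es @ [f])"
    using P assms by (intro hcycle_close) auto
  then show False using assms(1) by (auto simp: hacyclic_def)
qed

text \<open>In an acyclic hypergraph a second simple path with the same ends must start with the same
  edge and the same next vertex: otherwise the first edge closes a walk that avoids it.\<close>

lemma simple_hpath_first_step:
  assumes acyclic: "hacyclic E" and P: "simple_hpath E (a # v # vr) (f # es)"
    and Q: "simple_hpath E ys gs" and ends: "hd ys = a" "last ys = last (v # vr)"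
  obtains yr gr where "ys = a # v # yr" "gs = f # gr"
proof -
  have P': "simple_hpath E (v # vr) es" using simple_hpath_drop[OF P, of 1] by simp
  have f: "f \<in> E" "a \<in> f" "v \<in> f" "f \<notin> set es" "a \<noteq> v"
    using P by (auto simp: simple_hpath_def)
  have lenQ: "length ys = Suc (length gs)" and dQ: "distinct ys" "distinct gs" "set gs \<subseteq> E"
    using Q by (auto simp: simple_hpath_def hwalk_iff)
  have ya: "ys ! 0 = a" using ends(1) lenQ by (cases ys) auto
  have via_tail: "v = ys ! t" if "t \<le> length gs" "f \<notin> set (drop t gs)" "ys ! t \<in> f" for t
  proof -
    have Qt: "hwalk (drop t ys) (drop t gs)" using Q that(1) by (simp add: simple_hpath_def hwalk_drop)
    have "last (v # vr) = last (drop t ys)" using ends(2) lenQ that(1) by simp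
    note J = hwalk_join[OF _ Qt this]
    define W where "W = (v # vr) @ tl (rev (drop t ys))"
    have W: "hwalk W (es @ rev (drop t gs))" "hd W = v" "last W = ys ! t"
      using J P' that lenQ by (auto simp: W_def simple_hpath_def hd_drop_conv_nth)
    have "set (es @ rev (drop t gs)) \<subseteq> E" "f \<notin> set (es @ rev (drop t gs))"
      using P' dQ f that by (auto simp: simple_hpath_def dest: in_set_dropD)
    then show ?thesis
      using hacyclic_walk_avoiding_edge[OF acyclic f(1) W(1)] W f that by simp
  qed
  have "f \<in> set gs"
    using via_tail[of 0] ya f by (cases ys) auto
  then obtain t where t: "t < length gs" "gs ! t = f" by (auto simp: in_set_conv_nth)
  have "ys ! t = a"
  proof -
    have w: "hwalk (take (Suc t) ys) (take t gs)" using Q t by (simp add: simple_hpath_def hwalk_take)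
    have nf: "f \<notin> set (take t gs)" using dQ t by (auto simp: in_set_conv_nth nth_eq_iff_index_eq)
    have sE: "set (take t gs) \<subseteq> E" using dQ by (auto dest: in_set_takeD)
    have h: "hd (take (Suc t) ys) = a" using ya lenQ by (cases ys) auto
    have l: "last (take (Suc t) ys) = ys ! t" using t lenQ by (simp add: take_Suc_conv_app_nth)
    have "hd (take (Suc t) ys) = last (take (Suc t) ys)"
      by (rule hacyclic_walk_avoiding_edge[OF acyclic f(1) w sE nf])
        (use h l f simple_hpath_nth[OF Q t(1)] t in auto)
    then show ?thesis using h l by simp
  qed
  then have "t = 0" using ya dQ lenQ t nth_eq_iff_index_eq[of ys t 0] by simp
  then obtain gr where gs: "gs = f # gr" using t by (cases gs) auto
  then obtain y yr where ys: "ys = a # y # yr" using lenQ ya by (cases ys; cases "tl ys") auto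
  have "v = y" using via_tail[of 1] simple_hpath_nth[OF Q, of 0] dQ gs ys by auto
  then show thesis using that gs ys by simp
qed

lemma simple_hpath_unique:
  assumes "hacyclic E"
  shows "simple_hpath E vs es \<Longrightarrow> simple_hpath E ys gs \<Longrightarrow> hd vs = hd ys \<Longrightarrow> last vs = last ys
    \<Longrightarrow> vs = ys \<and> es = gs"
proof (induction es arbitrary: vs ys gs)
  case Nil
  then have "vs = [hd vs]" using simple_hpath_length[OF Nil(1)] by (cases vs) auto
  then show ?case using Nil simple_hpath_trivial[of E ys gs] by (metis last_ConsL list.sel(1))
next
  case (Cons f es)
  obtain a v vr where vs: "vs = a # v # vr"
    using simple_hpath_length[OF Cons.prems(1)] by (metis Suc_length_conv)
  have P: "simple_hpath E (a # v # vr) (f # es)" using Cons.prems(1) vs by simp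
  obtain yr gr where ys: "ys = a # v # yr" and gs: "gs = f # gr"
    by (rule simple_hpath_first_step[OF assms P Cons.prems(2)]) (use Cons.prems(3,4) vs in auto)
  have "simple_hpath E (v # vr) es" "simple_hpath E (v # yr) gr"
    using simple_hpath_drop[OF Cons.prems(1), of 1] simple_hpath_drop[OF Cons.prems(2), of 1] vs ys gs
    by simp_all
  moreover have "last (v # vr) = last (v # yr)" using Cons.prems(4) vs ys by simp
  ultimately have "v # vr = v # yr \<and> es = gr"
    using Cons.IH by (metis list.sel(1))
  then show ?case using vs ys gs by simp
qed

section \<open>Paths in a hypertree and gates onto edges\<close>

locale ordered_hypertree =
  fixes V :: "'v set" and E :: "'v set set" and e :: "nat \<Rightarrow> 'v set" and k :: nat
  assumes hypertree: "hypertree V E" and E_eq: "E = e ` {1..k}" and inj_e: "inj_on e {1..k}"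
begin

lemma hacyclic_E: "hacyclic E"
  using hypertree by (simp add: hypertree_def hacyclic_def)

lemma finite_V: "finite V"
  using hypertree by (simp add: hypertree_def hypergraph_def)

lemma edge_subset: "f \<in> E \<Longrightarrow> f \<subseteq> V"
  using hypertree by (simp add: hypertree_def hypergraph_def)

lemma card_edge: "f \<in> E \<Longrightarrow> 1 < card f"
  using hypertree by (simp add: hypertree_def hypergraph_def)

lemma e_in_E: "j \<in> {1..k} \<Longrightarrow> e j \<in> E"
  using E_eq by simp

definition path_of :: "'v \<Rightarrow> 'v \<Rightarrow> 'v list \<times> 'v set list" where
  "path_of a b = (THE p. hpath E (fst p) (snd p) \<and> hd (fst p) = a \<and> last (fst p) = b)"

lemma path_of_eqI:
  assumes "simple_hpath E vs es" "hd vs = a" "last vs = b" "a \<noteq> b"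
  shows "path_of a b = (vs, es)"
  unfolding path_of_def
proof (rule the_equality)
  fix p assume p: "hpath E (fst p) (snd p) \<and> hd (fst p) = a \<and> last (fst p) = b"
  then have "simple_hpath E (fst p) (snd p)" using assms(4) simple_hpath_if_hpath by metis
  then show "p = (vs, es)"
    using simple_hpath_unique[OF hacyclic_E _ assms(1)] p assms by (metis prod.collapse)
qed (use assms hpath_if_simple_hpath in auto)

lemma path_ofE:
  assumes "a \<in> V" "b \<in> V" "a \<noteq> b"
  obtains vs es where "path_of a b = (vs, es)" "simple_hpath E vs es" "hd vs = a" "last vs = b"
proof -
  obtain vs es where "hpath E vs es" "hd vs = a" "last vs = b"
    using hypertree assms unfolding hypertree_def hconnected_def by blast
  then show thesis
    using that simple_hpath_if_hpath path_of_eqI assms(3) by metis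
qed

lemma path_of_swap:
  assumes "a \<in> V" "b \<in> V" "a \<noteq> b" "path_of a b = (vs, es)"
  shows "path_of b a = (rev vs, rev es)"
proof -
  obtain vs' es' where "path_of a b = (vs', es')" "simple_hpath E vs' es'" "hd vs' = a" "last vs' = b"
    using path_ofE assms(1-3) .
  then show ?thesis
    using assms path_of_eqI[OF simple_hpath_rev] by (auto simp: hd_rev last_rev)
qed

definition edge_index :: "'v set \<Rightarrow> nat" where
  "edge_index g = (THE j. j \<in> {1..k} \<and> e j = g)"

lemma edge_index_e: "j \<in> {1..k} \<Longrightarrow> edge_index (e j) = j"
  unfolding edge_index_def by (rule the_equality) (use inj_e in \<open>auto dest: inj_onD\<close>)

lemma edge_index_inverse: "g \<in> E \<Longrightarrow> edge_index g \<in> {1..k} \<and> e (edge_index g) = g"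
  using E_eq edge_index_e by auto

definition min_pos :: "'v \<Rightarrow> 'v \<Rightarrow> nat" where
  "min_pos a b = (ARG_MIN (\<lambda>t. edge_index (snd (path_of a b) ! t)) t. t < length (snd (path_of a b)))"

definition min_edge :: "'v \<Rightarrow> 'v \<Rightarrow> nat" where
  "min_edge a b = edge_index (snd (path_of a b) ! min_pos a b)"

definition min_entry :: "'v \<Rightarrow> 'v \<Rightarrow> 'v" where
  "min_entry a b = fst (path_of a b) ! min_pos a b"

definition min_exit :: "'v \<Rightarrow> 'v \<Rightarrow> 'v" where
  "min_exit a b = fst (path_of a b) ! Suc (min_pos a b)"

lemma min_pos_minimal:
  assumes "a \<in> V" "b \<in> V" "a \<noteq> b" "path_of a b = (vs, es)"
  shows "min_pos a b < length es" "\<And>t. t < length es \<Longrightarrow> edge_index (es ! min_pos a b) \<le> edge_index (es ! t)"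
proof -
  obtain vs' es' where P: "path_of a b = (vs', es')" "simple_hpath E vs' es'" "hd vs' = a" "last vs' = b"
    using path_ofE assms(1-3) .
  have "es \<noteq> []"
    using P assms simple_hpath_length[OF P(2)] by (cases vs') auto
  then show "min_pos a b < length es" "\<And>t. t < length es \<Longrightarrow> edge_index (es ! min_pos a b) \<le> edge_index (es ! t)"
    using arg_min_nat_lemma[of "\<lambda>t. t < length es" 0 "\<lambda>t. edge_index (es ! t)"] assms(4)
    by (auto simp: min_pos_def)
qed

text \<open>The gate of \<open>a\<close> onto an edge \<open>f\<close> is the vertex of \<open>f\<close> that \<open>a\<close> reaches without passing through
  \<open>f\<close>; acyclicity makes it unique.\<close>

definition is_gate :: "'v set \<Rightarrow> 'v \<Rightarrow> 'v \<Rightarrow> bool" where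
  "is_gate f a z \<longleftrightarrow> z \<in> f \<and> (\<exists>ws fs. hwalk ws fs \<and> set fs \<subseteq> E \<and> f \<notin> set fs \<and> hd ws = a \<and> last ws = z)"

definition gate :: "'v set \<Rightarrow> 'v \<Rightarrow> 'v" where
  "gate f a = (THE z. is_gate f a z)"

lemma is_gate_unique:
  assumes "f \<in> E" "is_gate f a z" "is_gate f a z'"
  shows "z = z'"
proof -
  obtain ws fs ws' fs' where w: "hwalk ws fs" "set fs \<subseteq> E" "f \<notin> set fs" "hd ws = a" "last ws = z"
    and w': "hwalk ws' fs'" "set fs' \<subseteq> E" "f \<notin> set fs'" "hd ws' = a" "last ws' = z'"
    using assms(2,3) unfolding is_gate_def by blast
  have ne: "ws \<noteq> []" "ws' \<noteq> []" using w w' hwalk_not_Nil by auto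
  define W where "W = rev ws @ tl ws'"
  have "hwalk W (rev fs @ fs')"
    unfolding W_def using w w' ne by (intro hwalk_append hwalk_rev) (auto simp: last_rev)
  moreover have "hd W = z" "last W = z'"
    using ne w w' last_append_tl[of "rev ws" ws'] by (auto simp: W_def hd_rev last_rev)
  moreover have "set (rev fs @ fs') \<subseteq> E" "f \<notin> set (rev fs @ fs')" "z \<in> f" "z' \<in> f"
    using w w' assms(2,3) by (auto simp: is_gate_def)
  ultimately show ?thesis
    using hacyclic_walk_avoiding_edge[OF hacyclic_E assms(1)] by metis
qed

lemma is_gate_self:
  assumes "a \<in> f" shows "is_gate f a a"
proof -
  have "hwalk [a] [] \<and> set [] \<subseteq> E \<and> f \<notin> set [] \<and> hd [a] = a \<and> last [a] = a" by simp
  then show ?thesis using assms unfolding is_gate_def by blast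
qed

lemma is_gate_on_path:
  assumes "simple_hpath E vs es" "t < length es"
  shows "is_gate (es ! t) (hd vs) (vs ! t)"
proof -
  have "hwalk (take (Suc t) vs) (take t es)" "set (take t es) \<subseteq> E"
    using assms by (auto simp: simple_hpath_def hwalk_take dest: in_set_takeD)
  moreover have "es ! t \<notin> set (take t es)"
    using distinct_take[of es "Suc t"] assms by (simp add: simple_hpath_def take_Suc_conv_app_nth)
  moreover have "hd (take (Suc t) vs) = hd vs" by (cases vs) auto
  moreover have "last (take (Suc t) vs) = vs ! t"
    using assms simple_hpath_length[OF assms(1)] by (simp add: take_Suc_conv_app_nth)
  ultimately show ?thesis
    using simple_hpath_nth[OF assms] unfolding is_gate_def by blast
qed

lemma is_gate_exists:
  assumes "f \<in> E" "a \<in> V"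
  shows "\<exists>z. is_gate f a z"
proof (cases "a \<in> f")
  case True
  then show ?thesis using is_gate_self by blast
next
  case False
  have "f \<noteq> {}" using card_edge[OF assms(1)] by auto
  then obtain z where z: "z \<in> f" by blast
  then have "z \<in> V" "a \<noteq> z" using edge_subset assms False by auto
  then obtain vs es where P: "path_of a z = (vs, es)" "simple_hpath E vs es" "hd vs = a" "last vs = z"
    using path_ofE[OF assms(2)] by blast
  show ?thesis
  proof (cases "f \<in> set es")
    case True
    then obtain t where "t < length es" "es ! t = f" by (auto simp: in_set_conv_nth)
    then have "is_gate f a (vs ! t)" using is_gate_on_path[OF P(2)] P(3) by blast
    then show ?thesis ..
  next
    case False
    moreover have "hwalk vs es" "set es \<subseteq> E" using P(2) by (auto simp: simple_hpath_def)
    ultimately have "is_gate f a z" using P z unfolding is_gate_def by blast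
    then show ?thesis ..
  qed
qed

lemma gate_eqI:
  assumes "f \<in> E" "is_gate f a z"
  shows "gate f a = z"
  unfolding gate_def using assms is_gate_unique by (intro the_equality) auto

lemma is_gate_gate:
  assumes "f \<in> E" "a \<in> V"
  shows "is_gate f a (gate f a)"
  using is_gate_exists[OF assms] gate_eqI[OF assms(1)] by auto

lemma gate_on_path:
  assumes "a \<in> V" "b \<in> V" "a \<noteq> b" "path_of a b = (vs, es)" "t < length es"
  shows "gate (es ! t) a = vs ! t" "gate (es ! t) b = vs ! Suc t"
proof -
  obtain vs' es' where P: "path_of a b = (vs', es')" "simple_hpath E vs' es'" "hd vs' = a" "last vs' = b"
    using path_ofE assms(1-3) .
  have eq: "vs' = vs" "es' = es" using P(1) assms(4) by auto
  have E: "es ! t \<in> E" using P(2) assms(5) eq by (auto simp: simple_hpath_def)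
  show "gate (es ! t) a = vs ! t"
    using is_gate_on_path[OF P(2) assms(5)[folded eq]] gate_eqI[OF E] P(3) eq by simp
  have len: "length vs = Suc (length es)" using simple_hpath_length P(2) eq by simp
  have R: "simple_hpath E (rev vs) (rev es)" using simple_hpath_rev P(2) eq by simp
  have "rev es ! (length es - Suc t) = es ! t" "rev vs ! (length es - Suc t) = vs ! Suc t"
    using assms(5) len by (auto simp: rev_nth Suc_diff_Suc)
  moreover have "hd (rev vs) = b" using P(4) eq by (simp add: hd_rev)
  ultimately have "is_gate (es ! t) b (vs ! Suc t)"
    using is_gate_on_path[OF R, of "length es - Suc t"] assms(5) by simp
  then show "gate (es ! t) b = vs ! Suc t" by (rule gate_eqI[OF E])
qed

lemma gate_off_path:
  assumes "a \<in> V" "b \<in> V" "a \<noteq> b" "f \<in> E" "f \<notin> set (snd (path_of a b))"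
  shows "gate f a = gate f b"
proof -
  obtain ws fs ws' fs' where w: "hwalk ws fs" "set fs \<subseteq> E" "f \<notin> set fs" "hd ws = a" "last ws = gate f a"
    and w': "hwalk ws' fs'" "set fs' \<subseteq> E" "f \<notin> set fs'" "hd ws' = b" "last ws' = gate f b"
    using is_gate_gate[OF assms(4,1)] is_gate_gate[OF assms(4,2)] by (auto simp: is_gate_def)
  obtain vs es where P: "path_of a b = (vs, es)" "simple_hpath E vs es" "hd vs = a" "last vs = b"
    using path_ofE assms(1-3) .
  have ne: "ws \<noteq> []" "ws' \<noteq> []" "vs \<noteq> []" using w w' P hwalk_not_Nil by (auto simp: simple_hpath_def)
  define W where "W = rev ws @ tl vs"
  have W: "hwalk W (rev fs @ es)" "hd W = gate f a" "last W = b"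
    using w P ne last_append_tl[of "rev ws" vs]
    by (auto simp: W_def simple_hpath_def hd_rev last_rev intro: hwalk_append hwalk_rev)
  have "W \<noteq> []" using W(1) hwalk_not_Nil by blast
  have "hwalk (W @ tl ws') ((rev fs @ es) @ fs')"
    using W w' by (intro hwalk_append) auto
  moreover have "hd (W @ tl ws') = gate f a" "last (W @ tl ws') = gate f b"
    using W w' ne \<open>W \<noteq> []\<close> last_append_tl[of W ws'] by auto
  moreover have "set ((rev fs @ es) @ fs') \<subseteq> E" "f \<notin> set ((rev fs @ es) @ fs')"
    using w w' P assms(5) by (auto simp: simple_hpath_def)
  moreover have "gate f a \<in> f" "gate f b \<in> f"
    using is_gate_gate[OF assms(4,1)] is_gate_gate[OF assms(4,2)] by (auto simp: is_gate_def)
  ultimately show ?thesis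
    using hacyclic_walk_avoiding_edge[OF hacyclic_E assms(4)] by metis
qed

lemma min_edge_gates:
  assumes "a \<in> V" "b \<in> V" "a \<noteq> b"
  shows "min_edge a b \<in> {1..k}"
    and "e (min_edge a b) \<in> set (snd (path_of a b))"
    and "\<And>g. g \<in> set (snd (path_of a b)) \<Longrightarrow> min_edge a b \<le> edge_index g"
    and "min_entry a b = gate (e (min_edge a b)) a"
    and "min_exit a b = gate (e (min_edge a b)) b"
    and "min_entry a b \<noteq> min_exit a b"
    and "min_entry a b \<in> e (min_edge a b)" "min_exit a b \<in> e (min_edge a b)"
proof -
  obtain vs es where P: "path_of a b = (vs, es)" "simple_hpath E vs es" "hd vs = a" "last vs = b"
    using path_ofE assms .
  note r = min_pos_minimal[OF assms P(1)]
  have "es ! min_pos a b \<in> E" using P(2) r by (auto simp: simple_hpath_def)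
  then have j: "min_edge a b \<in> {1..k}" "e (min_edge a b) = es ! min_pos a b"
    using edge_index_inverse P(1) by (auto simp: min_edge_def)
  then show "min_edge a b \<in> {1..k}" "e (min_edge a b) \<in> set (snd (path_of a b))"
    using P(1) r by auto
  show "\<And>g. g \<in> set (snd (path_of a b)) \<Longrightarrow> min_edge a b \<le> edge_index g"
    using r P(1) by (auto simp: min_edge_def in_set_conv_nth)
  show "min_entry a b = gate (e (min_edge a b)) a" "min_exit a b = gate (e (min_edge a b)) b"
    using gate_on_path[OF assms P(1) r(1)] j P(1) by (auto simp: min_entry_def min_exit_def)
  show "min_entry a b \<noteq> min_exit a b"
    using P r simple_hpath_length[OF P(2)] by (auto simp: simple_hpath_def min_entry_def min_exit_def nth_eq_iff_index_eq)
  show "min_entry a b \<in> e (min_edge a b)" "min_exit a b \<in> e (min_edge a b)"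
    using simple_hpath_nth[OF P(2) r(1)] j P(1) by (auto simp: min_entry_def min_exit_def)
qed

lemma min_edge_swap:
  assumes "a \<in> V" "b \<in> V" "a \<noteq> b"
  shows "min_edge b a = min_edge a b" "min_entry b a = min_exit a b" "min_exit b a = min_entry a b"
proof -
  obtain vs es where P: "path_of a b = (vs, es)"
    using path_ofE assms .
  have "set (snd (path_of b a)) = set (snd (path_of a b))"
    using path_of_swap[OF assms P] P by simp
  then have "min_edge b a \<le> min_edge a b" "min_edge a b \<le> min_edge b a"
    using min_edge_gates[OF assms] min_edge_gates[OF assms(2,1) assms(3)[symmetric]] edge_index_e by metis+
  then show "min_edge b a = min_edge a b" by simp
  then show "min_entry b a = min_exit a b" "min_exit b a = min_entry a b"
    using min_edge_gates[OF assms] min_edge_gates[OF assms(2,1) assms(3)[symmetric]] by simp_all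
qed

lemma min_edge_of_edge:
  assumes "j \<in> {1..k}" "a \<in> e j" "b \<in> e j" "a \<noteq> b"
  shows "min_edge a b = j" "min_entry a b = a" "min_exit a b = b"
proof -
  have E: "e j \<in> E" using assms e_in_E by simp
  have ab: "a \<in> V" "b \<in> V" using edge_subset[OF E] assms by auto
  have "simple_hpath E [a, b] [e j]" using assms E by (simp add: simple_hpath_def)
  then have "path_of a b = ([a, b], [e j])" using path_of_eqI assms by fastforce
  then show "min_edge a b = j"
    using min_edge_gates(2)[OF ab assms(4)] assms inj_e min_edge_gates(1)[OF ab assms(4)] by (auto dest: inj_onD)
  moreover have "is_gate (e j) a a" "is_gate (e j) b b"
    using assms is_gate_self by auto
  ultimately show "min_entry a b = a" "min_exit a b = b"
    using min_edge_gates[OF ab assms(4)] gate_eqI[OF E] by simp_all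
qed

text \<open>The gates onto the edge of least index among the three paths separate \<open>u\<close>, \<open>v\<close>, \<open>w\<close>
  in the same way as their minimal edges do.\<close>

lemma min_edge_trans:
  fixes L :: "nat \<Rightarrow> 'v \<Rightarrow> 'v \<Rightarrow> bool"
  assumes V: "u \<in> V" "v \<in> V" "w \<in> V" "u \<noteq> v" "v \<noteq> w" "u \<noteq> w"
    and trans: "\<And>j x y z. L j x y \<Longrightarrow> L j y z \<Longrightarrow> L j x z" and irrefl: "\<And>j x. \<not> L j x x"
    and uv: "L (min_edge u v) (min_entry u v) (min_exit u v)"
    and vw: "L (min_edge v w) (min_entry v w) (min_exit v w)"
  shows "L (min_edge u w) (min_entry u w) (min_exit u w)"
proof -
  define m where "m = min (min_edge u v) (min (min_edge v w) (min_edge u w))"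
  have m: "m = min_edge u v \<or> m = min_edge v w \<or> m = min_edge u w" unfolding m_def by linarith
  have m_le: "m \<le> min_edge u v" "m \<le> min_edge v w" "m \<le> min_edge u w" unfolding m_def by auto
  have m_in: "m \<in> {1..k}" using m min_edge_gates(1) V by metis
  define f where "f = e m"
  have f: "f \<in> E" using m_in e_in_E f_def by simp
  have on_m: "min_entry a b = gate f a \<and> min_exit a b = gate f b \<and> gate f a \<noteq> gate f b"
    if "a \<in> V" "b \<in> V" "a \<noteq> b" "min_edge a b = m" for a b
    using min_edge_gates[OF that(1-3)] that(4) f_def by simp
  have off_m: "gate f a = gate f b"
    if ab: "a \<in> V" "b \<in> V" "a \<noteq> b" "m \<le> min_edge a b" "min_edge a b \<noteq> m" for a b
  proof -
    have "f \<notin> set (snd (path_of a b))"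
      using min_edge_gates(3)[OF ab(1-3), of f] edge_index_e[OF m_in] ab(4,5) f_def by fastforce
    then show ?thesis using gate_off_path[OF ab(1-3) f] by simp
  qed
  show ?thesis
  proof (cases "min_edge u w = m")
    case True
    then show ?thesis
      using uv vw m trans on_m[OF V(1,3,6)] on_m[OF V(1,2,4)] on_m[OF V(2,3,5)]
        off_m[OF V(1,2,4) m_le(1)] off_m[OF V(2,3,5) m_le(2)] by metis
  next
    case False
    then have "gate f u = gate f w" using off_m[OF V(1,3,6) m_le(3)] by blast
    then show ?thesis
      using uv vw m trans irrefl False on_m[OF V(1,2,4)] on_m[OF V(2,3,5)]
        off_m[OF V(1,2,4) m_le(1)] off_m[OF V(2,3,5) m_le(2)] by metis
  qed
qed

end

section \<open>Rotation words on cycles of prime length\<close>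

lemma less_fun_total:
  fixes f g :: "nat \<Rightarrow> 'b::linorder"
  assumes "f \<noteq> g"
  shows "less_fun f g \<or> less_fun g f"
proof -
  define m where "m = (LEAST m. f m \<noteq> g m)"
  have "f m \<noteq> g m" using assms LeastI_ex[of "\<lambda>m. f m \<noteq> g m"] by (auto simp: m_def)
  moreover have "\<forall>l<m. f l = g l" using not_less_Least m_def by blast
  ultimately show ?thesis unfolding less_fun_def by (metis linorder_neqE)
qed

lemma less_fun_imp_le_0:
  fixes f g :: "nat \<Rightarrow> 'b::linorder"
  shows "less_fun f g \<Longrightarrow> f 0 \<le> g 0"
  by (auto simp: less_fun_def) (metis bot_nat_0.not_eq_extremum order.order_iff_strict)

lemma less_fun_Suc:
  fixes f g :: "nat \<Rightarrow> 'b::linorder"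
  assumes "less_fun f g" "f 0 = g 0"
  shows "less_fun (\<lambda>m. f (Suc m)) (\<lambda>m. g (Suc m))"
proof -
  obtain m where m: "f m < g m" "\<forall>l<m. f l = g l" using assms(1) by (auto simp: less_fun_def)
  then obtain m' where "m = Suc m'" using assms(2) by (cases m) auto
  then show ?thesis using m unfolding less_fun_def by (intro exI[of _ m']) auto
qed

lemma less_funI_first_difference:
  fixes f g :: "nat \<Rightarrow> 'b::linorder"
  assumes "f \<noteq> g" and le: "\<And>l. (\<And>i. i < l \<Longrightarrow> f i = g i) \<Longrightarrow> f l \<le> g l"
  shows "less_fun f g"
proof (rule ccontr)
  assume "\<not> less_fun f g"
  then obtain m where "g m < f m" "\<And>i. i < m \<Longrightarrow> g i = f i"
    using less_fun_total[OF assms(1)] by (auto elim: less_funE)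
  then show False using le[of m] by fastforce
qed

lemma cyclic_perm_funpow_in: "cyclic_perm g F \<Longrightarrow> x \<in> F \<Longrightarrow> (g ^^ n) x \<in> F"
  by (induction n) (auto simp: cyclic_perm_def permutes_in_image)

lemma cyclic_perm_orbit:
  assumes cyc: "cyclic_perm g F" and x: "x \<in> F"
  shows "orbit g x = F"
proof
  show "orbit g x \<subseteq> F" using cyc x by (auto simp: orbit_altdef cyclic_perm_funpow_in)
  show "F \<subseteq> orbit g x"
  proof
    fix z assume z: "z \<in> F"
    have "g x \<in> F" using cyc x cyclic_perm_funpow_in[of g F x 1] by simp
    then obtain m where "(g ^^ m) (g x) = z" using cyc z by (auto simp: cyclic_perm_def)
    then have "(g ^^ Suc m) x = z" by (simp only: funpow_Suc_right comp_apply)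
    then show "z \<in> orbit g x" unfolding orbit_altdef by blast
  qed
qed

lemma coprime_periods_imp_constant:
  fixes h :: "nat \<Rightarrow> 'a"
  assumes "coprime N d" "d \<noteq> 0"
    and period_N: "\<And>t. h (t + N) = h t" and period_d: "\<And>t. h (Suc t + d) = h (Suc t)"
  shows "h (Suc t) = h 1"
proof -
  have multiple_N: "h (t + N * q) = h t" for t q
  proof (induction q)
    case (Suc q)
    have "t + N * Suc q = (t + N * q) + N" by simp
    then show ?case using Suc period_N by metis
  qed simp
  have multiple_d: "h (Suc t + d * q) = h (Suc t)" for t q
  proof (induction q)
    case (Suc q)
    have "Suc t + d * Suc q = Suc (t + d * q) + d" by simp
    then show ?case using Suc period_d by (metis add_Suc)
  qed simp
  obtain a b where ab: "d * a = N * b + 1"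
    using bezout_nat[of d N] assms(1,2) by (auto simp: coprime_iff_gcd_eq_1 gcd.commute)
  have step: "h (Suc (Suc t)) = h (Suc t)" for t
  proof -
    have "h (Suc t) = h (Suc t + d * a)" using multiple_d by simp
    also have "\<dots> = h (Suc (Suc t) + N * b)" using ab by (simp add: algebra_simps)
    also have "\<dots> = h (Suc (Suc t))" by (rule multiple_N)
    finally show ?thesis by simp
  qed
  show ?thesis by (induction t) (use step in auto)
qed

text \<open>A colouring of a cycle of prime length that is invariant under the shift taking \<open>x\<close> to \<open>y\<close>
  is invariant under every shift, because that shift generates the cyclic group.\<close>

lemma cyclic_perm_prime_words_differ:
  assumes cyc: "cyclic_perm g F" and pr: "prime (card F)"
    and xy: "x \<in> F" "y \<in> F" "x \<noteq> y" and nonconst: "\<exists>u\<in>F. \<exists>w\<in>F. \<chi> u \<noteq> \<chi> w"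
  shows "\<exists>m. \<chi> ((g ^^ Suc m) x) \<noteq> \<chi> ((g ^^ Suc m) y)"
proof (rule ccontr)
  assume "\<not> ?thesis"
  then have shift: "\<And>m. \<chi> ((g ^^ Suc m) x) = \<chi> ((g ^^ Suc m) y)" by blast
  have orb: "orbit g x = F" by (rule cyclic_perm_orbit[OF cyc xy(1)])
  have xo: "x \<in> orbit g x" using orb xy by simp
  define N where "N = funpow_dist1 g x x"
  have gN: "(g ^^ N) x = x" unfolding N_def using funpow_dist1_prop[OF xo] .
  have "card F = N"
    using card_image[OF inj_on_funpow_dist1[OF xo]] orb
    unfolding N_def orbit_conv_funpow_dist1[OF xo] by simp
  obtain d where d: "(g ^^ d) x = y" using cyc xy by (auto simp: cyclic_perm_def)
  have "\<not> N dvd d"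
  proof
    assume "N dvd d"
    then have "(g ^^ d) x = x" using funpow_mod_eq[of N g x d] gN by (simp add: dvd_eq_mod_eq_0)
    then show False using d xy by simp
  qed
  then have "coprime N d" "d \<noteq> 0" using pr \<open>card F = N\<close> by (auto simp: prime_imp_coprime intro: Nat.gr0I)
  moreover have "\<chi> ((g ^^ (t + N)) x) = \<chi> ((g ^^ t) x)" for t
    using gN by (simp add: funpow_add)
  moreover have "\<chi> ((g ^^ (Suc t + d)) x) = \<chi> ((g ^^ Suc t) x)" for t
    using shift[of t] d by (simp only: funpow_add comp_apply)
  ultimately have const: "\<chi> ((g ^^ Suc t) x) = \<chi> ((g ^^ 1) x)" for t
    by (rule coprime_periods_imp_constant[where h = "\<lambda>t. \<chi> ((g ^^ t) x)"])
  have "\<chi> z = \<chi> ((g ^^ 1) x)" if "z \<in> F" for z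
  proof -
    have "z \<in> orbit g x" using that orb by simp
    then obtain m where "0 < m" "(g ^^ m) x = z" unfolding orbit_altdef by blast
    then show ?thesis using const[of "m - 1"] by simp
  qed
  then show False using nonconst by metis
qed

section \<open>Labellings, compatible sequences and proper colourings\<close>

lemma bij_betw_card_filter:
  assumes "bij_betw \<pi> A B"
  shows "card {x \<in> A. P (\<pi> x)} = card {y \<in> B. P y}"
proof -
  have "bij_betw \<pi> {x \<in> A. P (\<pi> x)} {y \<in> B. P y}"
    using assms by (auto simp: bij_betw_def inj_on_def image_iff)
  then show ?thesis by (rule bij_betw_same_card)
qed

definition proper_colouring :: "'v set set \<Rightarrow> ('v \<Rightarrow> nat) \<Rightarrow> bool" where
  "proper_colouring E \<chi> \<longleftrightarrow> (\<forall>f\<in>E. \<exists>u\<in>f. \<exists>w\<in>f. \<chi> u \<noteq> \<chi> w)"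

locale prime_cyclic_hypertree = ordered_hypertree V E e k
  for V :: "'v set" and E e k +
  fixes c :: "nat \<Rightarrow> 'v \<Rightarrow> 'v"
  assumes prime_edges: "\<forall>f\<in>E. prime (card f)"
    and cyclic_c: "\<forall>i\<in>{1..k}. cyclic_perm (c i) (e i)"
begin

lemma e_subset_V: "j \<in> {1..k} \<Longrightarrow> e j \<subseteq> V"
  using edge_subset e_in_E by blast

lemma funpow_c_in: "j \<in> {1..k} \<Longrightarrow> x \<in> e j \<Longrightarrow> (c j ^^ m) x \<in> e j"
  using cyclic_perm_funpow_in[of "c j" "e j" x m] cyclic_c by simp

lemma c_in: "j \<in> {1..k} \<Longrightarrow> x \<in> e j \<Longrightarrow> c j x \<in> e j"
  using funpow_c_in[of j x 1] by simp

lemma c_inj: "j \<in> {1..k} \<Longrightarrow> x \<noteq> y \<Longrightarrow> c j x \<noteq> c j y"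
  using cyclic_c permutes_inj[of "c j" "e j"] by (auto simp: cyclic_perm_def dest: injD)

definition labellings :: "('v \<Rightarrow> nat) set" where
  "labellings = {\<pi> \<in> V \<rightarrow>\<^sub>E {1..card V}. bij_betw \<pi> V {1..card V}}"

lemma labellingD:
  assumes "\<pi> \<in> labellings"
  shows "inj_on \<pi> V" "\<pi> ` V = {1..card V}"
    and "v \<in> V \<Longrightarrow> \<pi> v \<in> {1..card V}" "v \<in> V \<Longrightarrow> inv_into V \<pi> (\<pi> v) = v"
    and "i \<in> {1..card V} \<Longrightarrow> inv_into V \<pi> i \<in> V" "i \<in> {1..card V} \<Longrightarrow> \<pi> (inv_into V \<pi> i) = i"
  using assms by (auto simp: labellings_def bij_betw_def inv_into_into f_inv_into_f[of _ \<pi> V])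

definition c_ascent :: "('v \<Rightarrow> nat) \<Rightarrow> 'v \<Rightarrow> 'v \<Rightarrow> bool" where
  "c_ascent \<pi> a b \<longleftrightarrow> \<pi> (c (min_edge a b) (min_entry a b)) < \<pi> (c (min_edge a b) (min_exit a b))"

lemma c_ascent_on_edge:
  assumes "j \<in> {1..k}" "x \<in> e j" "y \<in> e j" "x \<noteq> y"
  shows "c_ascent \<pi> x y \<longleftrightarrow> \<pi> (c j x) < \<pi> (c j y)"
  using min_edge_of_edge[OF assms] by (simp add: c_ascent_def)

lemma H_descents_iff:
  assumes "\<pi> \<in> labellings" "i \<in> {1..<card V}"
  shows "i \<in> H_descents V E e k c \<pi> \<longleftrightarrow> \<not> c_ascent \<pi> (inv_into V \<pi> i) (inv_into V \<pi> (Suc i))"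
proof -
  define a b where "a = inv_into V \<pi> i" and "b = inv_into V \<pi> (Suc i)"
  have ab: "a \<in> V" "b \<in> V" "a \<noteq> b"
  proof -
    have i: "i \<in> {1..card V}" "Suc i \<in> {1..card V}" using assms(2) by auto
    show "a \<in> V" "b \<in> V" using labellingD(5)[OF assms(1) i(1)] labellingD(5)[OF assms(1) i(2)]
      by (simp_all add: a_def b_def)
    show "a \<noteq> b" using labellingD(6)[OF assms(1) i(1)] labellingD(6)[OF assms(1) i(2)]
      by (metis a_def b_def n_not_Suc_n)
  qed
  note m = min_edge_gates[OF ab]
  have "c (min_edge a b) (min_entry a b) \<noteq> c (min_edge a b) (min_exit a b)"
    using m c_inj by blast
  moreover have "c (min_edge a b) (min_entry a b) \<in> V" "c (min_edge a b) (min_exit a b) \<in> V"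
    using m c_in e_subset_V by blast+
  ultimately have "\<pi> (c (min_edge a b) (min_entry a b)) \<noteq> \<pi> (c (min_edge a b) (min_exit a b))"
    using labellingD(1)[OF assms(1)] by (meson inj_onD)
  moreover have "i \<in> H_descents V E e k c \<pi> \<longleftrightarrow>
      \<pi> (c (min_edge a b) (min_exit a b)) < \<pi> (c (min_edge a b) (min_entry a b))"
    using assms(2) unfolding H_descents_def a_def b_def min_edge_def min_entry_def min_exit_def
      min_pos_def path_of_def edge_index_def
    by (simp add: Let_def case_prod_beta)
  ultimately show ?thesis unfolding c_ascent_def a_def b_def by linarith
qed

definition compatible :: "(nat \<Rightarrow> nat) \<Rightarrow> ('v \<Rightarrow> nat) \<Rightarrow> (nat \<Rightarrow> nat) set" where
  "compatible \<alpha> \<pi> = {s \<in> {1..card V} \<rightarrow>\<^sub>E UNIV.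
      (\<forall>j\<in>{1..card V}. s j \<ge> 1) \<and>
      (\<forall>j. 1 \<le> j \<and> j < card V \<longrightarrow> s j \<le> s (j+1) \<and> (j \<in> H_descents V E e k c \<pi> \<longrightarrow> s j < s (j+1))) \<and>
      (\<forall>a. card {j\<in>{1..card V}. s j = a} = \<alpha> a)}"

definition colourings :: "(nat \<Rightarrow> nat) \<Rightarrow> ('v \<Rightarrow> nat) set" where
  "colourings \<alpha> = {\<chi> \<in> V \<rightarrow>\<^sub>E UNIV.
      (\<forall>v\<in>V. \<chi> v \<ge> 1) \<and> proper_colouring E \<chi> \<and> (\<forall>a. card {v\<in>V. \<chi> v = a} = \<alpha> a)}"

lemma compatible_mono:
  assumes "s \<in> compatible \<alpha> \<pi>" "1 \<le> i" "i \<le> j" "j \<le> card V"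
  shows "s i \<le> s j"
  using assms(3,4)
proof (induction j rule: dec_induct)
  case (step j)
  have "\<forall>j. 1 \<le> j \<and> j < card V \<longrightarrow> s j \<le> s (j + 1)"
    using assms(1) unfolding compatible_def by blast
  then have "s j \<le> s (Suc j)" using assms(2) step by simp
  then show ?case using step by simp
qed simp

lemma c_ascent_if_next_same_colour:
  assumes \<pi>: "\<pi> \<in> labellings" and s: "s \<in> compatible \<alpha> \<pi>" and ab: "a \<in> V" "b \<in> V"
    and succ: "\<pi> b = Suc (\<pi> a)" and colour: "s (\<pi> a) = s (\<pi> b)"
  shows "c_ascent \<pi> a b"
proof -
  have i: "\<pi> a \<in> {1..<card V}" using labellingD(3)[OF \<pi>] ab succ by fastforce
  then have "\<pi> a \<notin> H_descents V E e k c \<pi>" using s colour succ by (auto simp: compatible_def)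
  then show ?thesis using H_descents_iff[OF \<pi> i] labellingD(4)[OF \<pi>] ab succ by metis
qed

lemma c_ascent_trans:
  assumes "\<pi> \<in> labellings" "u \<in> V" "v \<in> V" "w \<in> V" "u \<noteq> v" "v \<noteq> w" "u \<noteq> w"
    and "c_ascent \<pi> u v" "c_ascent \<pi> v w"
  shows "c_ascent \<pi> u w"
  using min_edge_trans[OF assms(2-7), of "\<lambda>j x y. \<pi> (c j x) < \<pi> (c j y)"] assms(8,9)
  by (simp add: c_ascent_def)

text \<open>Within a block of equal values of \<open>s\<close> there are no \<open>H\<close>-descents, and ascents compose.\<close>

lemma c_ascent_if_same_colour:
  assumes \<pi>: "\<pi> \<in> labellings" and s: "s \<in> compatible \<alpha> \<pi>" and ab: "a \<in> V" "b \<in> V"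
    and less: "\<pi> a < \<pi> b" and colour: "s (\<pi> a) = s (\<pi> b)"
  shows "c_ascent \<pi> a b"
proof -
  obtain d where "\<pi> b = \<pi> a + Suc d" using less less_imp_Suc_add by fastforce
  then show ?thesis using ab colour
  proof (induction d arbitrary: a)
    case 0
    then show ?case using c_ascent_if_next_same_colour[OF \<pi> s] by simp
  next
    case (Suc d)
    define w where "w = inv_into V \<pi> (Suc (\<pi> a))"
    have range: "1 \<le> \<pi> a" "\<pi> b \<le> card V"
      using labellingD(3)[OF \<pi> Suc.prems(2)] labellingD(3)[OF \<pi> Suc.prems(3)] by auto
    then have w: "w \<in> V" "\<pi> w = Suc (\<pi> a)"
      using labellingD(5,6)[OF \<pi>, of "Suc (\<pi> a)"] Suc.prems(1) unfolding w_def by auto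
    have "s (\<pi> a) \<le> s (\<pi> w)" "s (\<pi> w) \<le> s (\<pi> b)"
      using compatible_mono[OF s] range w Suc.prems(1) by auto
    then have cw: "s (\<pi> a) = s (\<pi> w)" "s (\<pi> w) = s (\<pi> b)" using Suc.prems(4) by auto
    have "c_ascent \<pi> a w" using c_ascent_if_next_same_colour[OF \<pi> s Suc.prems(2) w(1) w(2) cw(1)] .
    moreover have "c_ascent \<pi> w b" using Suc.IH[OF _ w(1) Suc.prems(3) cw(2)] w Suc.prems(1) by simp
    moreover have "a \<noteq> w" "w \<noteq> b" "a \<noteq> b" using w Suc.prems(1) by auto
    ultimately show ?case using c_ascent_trans[OF \<pi> Suc.prems(2) w(1) Suc.prems(3)] by blast
  qed
qed

lemma rotations_keep_order:
  assumes \<pi>: "\<pi> \<in> labellings" and s: "s \<in> compatible \<alpha> \<pi>" and j: "j \<in> {1..k}"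
    and xy: "x \<in> e j" "y \<in> e j" and less: "\<pi> x < \<pi> y"
    and agree: "\<And>i. i < l \<Longrightarrow> s (\<pi> ((c j ^^ i) x)) = s (\<pi> ((c j ^^ i) y))"
  shows "\<pi> ((c j ^^ l) x) < \<pi> ((c j ^^ l) y)"
  using agree
proof (induction l)
  case (Suc l)
  define x' y' where "x' = (c j ^^ l) x" and "y' = (c j ^^ l) y"
  have e: "x' \<in> e j" "y' \<in> e j" using funpow_c_in[OF j] xy by (simp_all add: x'_def y'_def)
  then have V: "x' \<in> V" "y' \<in> V" using e_subset_V[OF j] by auto
  have less': "\<pi> x' < \<pi> y'" using Suc by (simp add: x'_def y'_def)
  then have "x' \<noteq> y'" by auto
  have "c_ascent \<pi> x' y'"
    using c_ascent_if_same_colour[OF \<pi> s V less'] Suc.prems[of l] by (simp add: x'_def y'_def)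
  then have "\<pi> (c j x') < \<pi> (c j y')" using c_ascent_on_edge[OF j e \<open>x' \<noteq> y'\<close>] by simp
  then show ?case by (simp add: x'_def y'_def)
qed (simp add: less)

lemma compatible_proper:
  assumes \<pi>: "\<pi> \<in> labellings" and s: "s \<in> compatible \<alpha> \<pi>"
  shows "proper_colouring E (\<lambda>v. s (\<pi> v))"
  unfolding proper_colouring_def
proof (rule ccontr)
  assume "\<not> (\<forall>f\<in>E. \<exists>u\<in>f. \<exists>w\<in>f. s (\<pi> u) \<noteq> s (\<pi> w))"
  then obtain f where f: "f \<in> E" "\<forall>u\<in>f. \<forall>w\<in>f. s (\<pi> u) = s (\<pi> w)" by blast
  then obtain j where j: "j \<in> {1..k}" "f = e j" using E_eq by blast
  have mono: "s (\<pi> u) = s (\<pi> w)" if "u \<in> e j" "w \<in> e j" for u w using f(2) j(2) that by blast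
  have "finite f" using f(1) edge_subset finite_V finite_subset by blast
  then obtain a b where ab: "a \<in> e j" "b \<in> e j" "a \<noteq> b"
    using card_edge[OF f(1)] card_le_Suc0_iff_eq[of f] j(2) by fastforce
  have "\<pi> a \<noteq> \<pi> b" using labellingD(1)[OF \<pi>] ab e_subset_V[OF j(1)] by (meson inj_onD subsetD)
  then obtain x y where xy: "x \<in> e j" "y \<in> e j" "\<pi> x < \<pi> y"
  proof (cases "\<pi> a < \<pi> b")
    case False
    then show thesis using that[of b a] ab \<open>\<pi> a \<noteq> \<pi> b\<close> by simp
  qed (use ab in blast)
  have rot: "\<pi> ((c j ^^ t) x) < \<pi> ((c j ^^ t) y)" for t
    using rotations_keep_order[OF \<pi> s j(1) xy] mono funpow_c_in[OF j(1)] xy(1,2) by blast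
  obtain d where d: "(c j ^^ d) x = y" using cyclic_c j(1) xy unfolding cyclic_perm_def by blast
  define \<sigma> where "\<sigma> q = \<pi> ((c j ^^ (d * q)) x)" for q
  have "\<sigma> q < \<sigma> (Suc q)" for q
  proof -
    have "d * Suc q = d * q + d" by simp
    then have "(c j ^^ (d * Suc q)) x = (c j ^^ (d * q)) y" unfolding d[symmetric]
      by (simp only: funpow_add comp_apply)
    then show ?thesis using rot[of "d * q"] by (simp add: \<sigma>_def)
  qed
  then have "Suc (card V) \<le> \<sigma> (Suc (card V))"
    using strict_mono_imp_increasing strict_mono_Suc_iff by blast
  moreover have "\<sigma> (Suc (card V)) \<le> card V"
    using labellingD(3)[OF \<pi>] funpow_c_in[OF j(1) xy(1)] e_subset_V[OF j(1)] unfolding \<sigma>_def by force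
  ultimately show False by simp
qed


definition rotation_word :: "('v \<Rightarrow> nat) \<Rightarrow> nat \<Rightarrow> 'v \<Rightarrow> nat \<Rightarrow> nat" where
  "rotation_word \<chi> j x = (\<lambda>m. \<chi> ((c j ^^ Suc m) x))"

definition precedes :: "('v \<Rightarrow> nat) \<Rightarrow> 'v \<Rightarrow> 'v \<Rightarrow> bool" where
  "precedes \<chi> a b \<longleftrightarrow> \<chi> a < \<chi> b \<or> (\<chi> a = \<chi> b \<and> a \<noteq> b \<and>
     less_fun (rotation_word \<chi> (min_edge a b) (min_entry a b)) (rotation_word \<chi> (min_edge a b) (min_exit a b)))"

lemma rotation_word_c: "rotation_word \<chi> j (c j x) = (\<lambda>m. rotation_word \<chi> j x (Suc m))"
  unfolding rotation_word_def by (simp only: funpow_Suc_right comp_apply)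

lemma rotation_word_0: "rotation_word \<chi> j x 0 = \<chi> (c j x)"
  by (simp add: rotation_word_def)

lemma rotation_words_differ:
  assumes "proper_colouring E \<chi>" "a \<in> V" "b \<in> V" "a \<noteq> b"
  shows "rotation_word \<chi> (min_edge a b) (min_entry a b) \<noteq> rotation_word \<chi> (min_edge a b) (min_exit a b)"
proof -
  note m = min_edge_gates[OF assms(2-4)]
  have E: "e (min_edge a b) \<in> E" using e_in_E m(1) by blast
  have "\<exists>u\<in>e (min_edge a b). \<exists>w\<in>e (min_edge a b). \<chi> u \<noteq> \<chi> w"
    using assms(1) E unfolding proper_colouring_def by blast
  then obtain l where "\<chi> ((c (min_edge a b) ^^ Suc l) (min_entry a b)) \<noteq> \<chi> ((c (min_edge a b) ^^ Suc l) (min_exit a b))"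
    using cyclic_perm_prime_words_differ[of "c (min_edge a b)" "e (min_edge a b)" "min_entry a b" "min_exit a b" \<chi>]
      cyclic_c prime_edges E m by blast
  then show ?thesis unfolding rotation_word_def by metis
qed

lemma precedes_irrefl: "\<not> precedes \<chi> a a"
  by (simp add: precedes_def)

lemma precedes_asym:
  assumes "a \<in> V" "b \<in> V" "precedes \<chi> a b"
  shows "\<not> precedes \<chi> b a"
proof
  assume ba: "precedes \<chi> b a"
  have "a \<noteq> b" using assms(3) precedes_irrefl by metis
  note swap = min_edge_swap[OF assms(1,2) this]
  show False using assms(3) ba swap less_fun_asym unfolding precedes_def by auto
qed

lemma precedes_trans:
  assumes V: "a \<in> V" "b \<in> V" "d \<in> V" and p: "precedes \<chi> a b" "precedes \<chi> b d"
  shows "precedes \<chi> a d"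
proof (cases "\<chi> a = \<chi> b \<and> \<chi> b = \<chi> d")
  case False
  then show ?thesis using p unfolding precedes_def by auto
next
  case True
  have ne: "a \<noteq> b" "b \<noteq> d" using p precedes_irrefl by metis+
  have "a \<noteq> d" using precedes_asym[OF V(1,2) p(1)] p(2) by auto
  have "less_fun (rotation_word \<chi> (min_edge a d) (min_entry a d)) (rotation_word \<chi> (min_edge a d) (min_exit a d))"
    using min_edge_trans[OF V ne \<open>a \<noteq> d\<close>, of "\<lambda>j x y. less_fun (rotation_word \<chi> j x) (rotation_word \<chi> j y)"]
      p True less_fun_trans less_fun_irrefl unfolding precedes_def by auto
  then show ?thesis using True \<open>a \<noteq> d\<close> unfolding precedes_def by simp
qed

lemma precedes_total:
  assumes "proper_colouring E \<chi>" "a \<in> V" "b \<in> V" "a \<noteq> b"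
  shows "precedes \<chi> a b \<or> precedes \<chi> b a"
proof (cases "\<chi> a = \<chi> b")
  case True
  then show ?thesis
    using less_fun_total[OF rotation_words_differ[OF assms]] min_edge_swap[OF assms(2-4)] assms(4)
    unfolding precedes_def by auto
qed (auto simp: precedes_def)

lemma precedes_cong:
  assumes "a \<in> V" "b \<in> V" "\<And>v. v \<in> V \<Longrightarrow> \<chi> v = \<chi>' v"
  shows "precedes \<chi> a b \<longleftrightarrow> precedes \<chi>' a b"
proof (cases "a = b")
  case False
  note m = min_edge_gates[OF assms(1,2) False]
  have "rotation_word \<chi> (min_edge a b) z = rotation_word \<chi>' (min_edge a b) z" if "z \<in> e (min_edge a b)" for z
    unfolding rotation_word_def using assms(3) funpow_c_in[OF m(1) that] e_subset_V[OF m(1)] by blast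
  then show ?thesis using m assms unfolding precedes_def by simp
qed (simp add: precedes_irrefl)

lemma compatible_precedes:
  assumes \<pi>: "\<pi> \<in> labellings" and s: "s \<in> compatible \<alpha> \<pi>" and ab: "a \<in> V" "b \<in> V"
    and less: "\<pi> a < \<pi> b"
  shows "precedes (\<lambda>v. s (\<pi> v)) a b"
proof (cases "s (\<pi> a) = s (\<pi> b)")
  case False
  moreover have "s (\<pi> a) \<le> s (\<pi> b)"
    using compatible_mono[OF s] labellingD(3)[OF \<pi> ab(1)] labellingD(3)[OF \<pi> ab(2)] less by auto
  ultimately show ?thesis by (simp add: precedes_def)
next
  case True
  define \<chi> where "\<chi> = (\<lambda>v. s (\<pi> v))"
  have "a \<noteq> b" using less by auto
  note m = min_edge_gates[OF ab this]
  define j x y where "j = min_edge a b" and "x = min_entry a b" and "y = min_exit a b"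
  have xy: "j \<in> {1..k}" "x \<in> e j" "y \<in> e j" using m by (simp_all add: j_def x_def y_def)
  then have j: "j \<in> {1..k}" "c j x \<in> e j" "c j y \<in> e j" using c_in by auto
  have ascent: "\<pi> (c j x) < \<pi> (c j y)"
    using c_ascent_if_same_colour[OF \<pi> s ab less True] by (simp add: c_ascent_def j_def x_def y_def)
  have shift: "(c j ^^ i) (c j z) = (c j ^^ Suc i) z" for i z
    by (simp only: funpow_Suc_right comp_apply)
  have first_difference: "rotation_word \<chi> j x l \<le> rotation_word \<chi> j y l"
    if "\<And>i. i < l \<Longrightarrow> rotation_word \<chi> j x i = rotation_word \<chi> j y i" for l
  proof -
    have "\<pi> ((c j ^^ Suc l) x) < \<pi> ((c j ^^ Suc l) y)"
      using rotations_keep_order[OF \<pi> s j ascent, of l] that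
      by (simp add: shift rotation_word_def \<chi>_def del: funpow.simps)
    moreover have "(c j ^^ Suc l) x \<in> V" "(c j ^^ Suc l) y \<in> V"
      using funpow_c_in[OF xy(1,2)] funpow_c_in[OF xy(1,3)] e_subset_V[OF j(1)] by blast+
    ultimately show ?thesis
      using compatible_mono[OF s] labellingD(3)[OF \<pi>]
      by (simp add: rotation_word_def \<chi>_def less_imp_le del: funpow.simps)
  qed
  have "rotation_word \<chi> j x \<noteq> rotation_word \<chi> j y"
    using rotation_words_differ[OF compatible_proper[OF \<pi> s] ab \<open>a \<noteq> b\<close>]
    by (simp add: \<chi>_def j_def x_def y_def)
  then have "less_fun (rotation_word \<chi> j x) (rotation_word \<chi> j y)"
    using first_difference by (rule less_funI_first_difference)
  then show ?thesis using True \<open>a \<noteq> b\<close> unfolding precedes_def \<chi>_def j_def x_def y_def by simp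
qed

lemma compatible_precedes_iff:
  assumes \<pi>: "\<pi> \<in> labellings" and s: "s \<in> compatible \<alpha> \<pi>" and ab: "a \<in> V" "b \<in> V"
  shows "precedes (\<lambda>v. s (\<pi> v)) a b \<longleftrightarrow> \<pi> a < \<pi> b"
proof
  assume p: "precedes (\<lambda>v. s (\<pi> v)) a b"
  have "a \<noteq> b" using p precedes_irrefl by metis
  then have "\<pi> a \<noteq> \<pi> b" using labellingD(1)[OF \<pi>] ab by (meson inj_onD)
  then show "\<pi> a < \<pi> b"
    using compatible_precedes[OF \<pi> s ab(2,1)] precedes_asym[OF ab p] by fastforce
qed (rule compatible_precedes[OF \<pi> s ab])

lemma labelling_eq_card_less:
  assumes \<pi>: "\<pi> \<in> labellings" and v: "v \<in> V"
  shows "\<pi> v = Suc (card {w \<in> V. \<pi> w < \<pi> v})"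
proof -
  have "bij_betw \<pi> V {1..card V}" using \<pi> by (simp add: labellings_def)
  then have "card {w \<in> V. \<pi> w < \<pi> v} = card {i \<in> {1..card V}. i < \<pi> v}"
    by (rule bij_betw_card_filter)
  also have "{i \<in> {1..card V}. i < \<pi> v} = {1..<\<pi> v}" using labellingD(3)[OF \<pi> v] by auto
  finally show ?thesis using labellingD(3)[OF \<pi> v] by simp
qed

definition rank :: "('v \<Rightarrow> nat) \<Rightarrow> 'v \<Rightarrow> nat" where
  "rank \<chi> = restrict (\<lambda>v. Suc (card {w \<in> V. precedes \<chi> w v})) V"

lemma rank_less_iff:
  assumes "proper_colouring E \<chi>" "a \<in> V" "b \<in> V"
  shows "rank \<chi> a < rank \<chi> b \<longleftrightarrow> precedes \<chi> a b"
proof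
  assume p: "precedes \<chi> a b"
  have "{w \<in> V. precedes \<chi> w a} \<subset> {w \<in> V. precedes \<chi> w b}"
    using precedes_trans[OF _ assms(2,3) _ p] assms(2) p precedes_irrefl by blast
  then have "card {w \<in> V. precedes \<chi> w a} < card {w \<in> V. precedes \<chi> w b}"
    using finite_V by (intro psubset_card_mono) auto
  then show "rank \<chi> a < rank \<chi> b" using assms by (simp add: rank_def)
next
  assume less: "rank \<chi> a < rank \<chi> b"
  show "precedes \<chi> a b"
  proof (rule ccontr)
    assume "\<not> precedes \<chi> a b"
    moreover have "a \<noteq> b" using less by auto
    ultimately have "precedes \<chi> b a" using precedes_total[OF assms] by blast
    then have "{w \<in> V. precedes \<chi> w b} \<subseteq> {w \<in> V. precedes \<chi> w a}"
      using precedes_trans[OF _ assms(3,2)] by blast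
    then have "card {w \<in> V. precedes \<chi> w b} \<le> card {w \<in> V. precedes \<chi> w a}"
      using finite_V by (intro card_mono) auto
    then show False using less assms by (simp add: rank_def)
  qed
qed

lemma rank_labelling:
  assumes "proper_colouring E \<chi>"
  shows "rank \<chi> \<in> labellings"
proof -
  have inj: "inj_on (rank \<chi>) V"
  proof (rule inj_onI)
    fix a b assume ab: "a \<in> V" "b \<in> V" "rank \<chi> a = rank \<chi> b"
    show "a = b"
      using precedes_total[OF assms ab(1,2)] rank_less_iff[OF assms ab(1,2)]
        rank_less_iff[OF assms ab(2,1)] ab(3) by auto
  qed
  have into: "rank \<chi> v \<in> {1..card V}" if v: "v \<in> V" for v
  proof -
    have "{w \<in> V. precedes \<chi> w v} \<subseteq> V - {v}" using precedes_irrefl by blast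
    then have "card {w \<in> V. precedes \<chi> w v} \<le> card V - 1"
      using finite_V v card_mono[of "V - {v}"] by fastforce
    moreover have "card V \<ge> 1" using v finite_V card_gt_0_iff[of V] by auto
    ultimately show ?thesis using v by (simp add: rank_def)
  qed
  have "rank \<chi> ` V = {1..card V}"
    using inj into by (intro card_subset_eq) (auto simp: card_image)
  then show ?thesis using inj into by (auto simp: labellings_def bij_betw_def rank_def)
qed

lemma rank_compatible:
  assumes \<pi>: "\<pi> \<in> labellings" and s: "s \<in> compatible \<alpha> \<pi>"
  shows "rank (restrict (\<lambda>v. s (\<pi> v)) V) = \<pi>"
proof (rule PiE_ext)
  show "rank (restrict (\<lambda>v. s (\<pi> v)) V) \<in> V \<rightarrow>\<^sub>E UNIV" by (simp add: rank_def)
  show "\<pi> \<in> V \<rightarrow>\<^sub>E UNIV" using \<pi> by (auto simp: labellings_def)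
  fix v assume v: "v \<in> V"
  have "{w \<in> V. precedes (restrict (\<lambda>v. s (\<pi> v)) V) w v} = {w \<in> V. \<pi> w < \<pi> v}"
    using precedes_cong[of _ v "restrict (\<lambda>v. s (\<pi> v)) V" "\<lambda>v. s (\<pi> v)"]
      compatible_precedes_iff[OF \<pi> s _ v] v by auto
  then show "rank (restrict (\<lambda>v. s (\<pi> v)) V) v = \<pi> v"
    using labelling_eq_card_less[OF \<pi> v] v by (simp add: rank_def)
qed


lemma precedes_same_colour_c_ascent:
  assumes \<chi>: "proper_colouring E \<chi>" and uw: "u \<in> V" "w \<in> V"
    and colour: "\<chi> u = \<chi> w" and p: "precedes \<chi> u w"
  shows "c_ascent (rank \<chi>) u w"
proof (rule ccontr)
  assume no_ascent: "\<not> c_ascent (rank \<chi>) u w"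
  have "u \<noteq> w" using p precedes_irrefl by metis
  note m = min_edge_gates[OF uw this]
  define j x y where "j = min_edge u w" and "x = min_entry u w" and "y = min_exit u w"
  have j: "j \<in> {1..k}" "x \<in> e j" "y \<in> e j" "x \<noteq> y" using m by (simp_all add: j_def x_def y_def)
  have words: "less_fun (rotation_word \<chi> j x) (rotation_word \<chi> j y)"
    using p colour by (simp add: precedes_def j_def x_def y_def)
  have cxy: "c j y \<in> e j" "c j x \<in> e j" "c j y \<noteq> c j x" using c_in c_inj j by auto
  have V: "c j y \<in> V" "c j x \<in> V" using cxy e_subset_V[OF j(1)] by auto
  have "rank \<chi> (c j y) \<noteq> rank \<chi> (c j x)"
    using labellingD(1)[OF rank_labelling[OF \<chi>]] V cxy(3) by (meson inj_onD)
  then have "rank \<chi> (c j y) < rank \<chi> (c j x)"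
    using no_ascent by (simp add: c_ascent_def j_def x_def y_def)
  then have p': "precedes \<chi> (c j y) (c j x)" using rank_less_iff[OF \<chi> V] by simp
  have "\<chi> (c j x) \<le> \<chi> (c j y)" using less_fun_imp_le_0[OF words] by (simp add: rotation_word_0)
  then have "\<chi> (c j y) = \<chi> (c j x)"
    and "less_fun (rotation_word \<chi> j (c j y)) (rotation_word \<chi> j (c j x))"
    using p' min_edge_of_edge[OF j(1) cxy] unfolding precedes_def by auto
  then have "less_fun (\<lambda>m. rotation_word \<chi> j y (Suc m)) (\<lambda>m. rotation_word \<chi> j x (Suc m))"
    and "less_fun (\<lambda>m. rotation_word \<chi> j x (Suc m)) (\<lambda>m. rotation_word \<chi> j y (Suc m))"
    using less_fun_Suc[OF words] by (simp_all add: rotation_word_c rotation_word_0)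
  then show False using less_fun_asym by blast
qed

definition colour_sequence :: "('v \<Rightarrow> nat) \<Rightarrow> nat \<Rightarrow> nat" where
  "colour_sequence \<chi> = restrict (\<lambda>i. \<chi> (inv_into V (rank \<chi>) i)) {1..card V}"

lemma colour_sequence_compatible:
  assumes \<chi>: "\<chi> \<in> colourings \<alpha>"
  shows "colour_sequence \<chi> \<in> compatible \<alpha> (rank \<chi>)"
proof -
  have proper: "proper_colouring E \<chi>" using \<chi> by (simp add: colourings_def)
  note \<pi> = rank_labelling[OF proper]
  note pD = labellingD[OF \<pi>]
  have seq: "colour_sequence \<chi> i = \<chi> (inv_into V (rank \<chi>) i)" if "i \<in> {1..card V}" for i
    using that by (simp add: colour_sequence_def)
  have pos: "\<forall>i\<in>{1..card V}. colour_sequence \<chi> i \<ge> 1"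
    using \<chi> seq pD(5) by (auto simp: colourings_def)
  have content: "card {i \<in> {1..card V}. colour_sequence \<chi> i = a} = \<alpha> a" for a
  proof -
    have "bij_betw (rank \<chi>) V {1..card V}" using \<pi> by (simp add: labellings_def)
    then have "card {v \<in> V. colour_sequence \<chi> (rank \<chi> v) = a} = card {i \<in> {1..card V}. colour_sequence \<chi> i = a}"
      by (rule bij_betw_card_filter)
    moreover have "{v \<in> V. colour_sequence \<chi> (rank \<chi> v) = a} = {v \<in> V. \<chi> v = a}"
      using seq pD(3,4) by auto
    ultimately show ?thesis using \<chi> by (simp add: colourings_def)
  qed
  have steps: "colour_sequence \<chi> i \<le> colour_sequence \<chi> (i + 1) \<and>
      (i \<in> H_descents V E e k c (rank \<chi>) \<longrightarrow> colour_sequence \<chi> i < colour_sequence \<chi> (i + 1))"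
    if i: "1 \<le> i" "i < card V" for i
  proof -
    define u w where "u = inv_into V (rank \<chi>) i" and "w = inv_into V (rank \<chi>) (Suc i)"
    have uw: "u \<in> V" "w \<in> V" "rank \<chi> u = i" "rank \<chi> w = Suc i"
      using pD(5,6) i unfolding u_def w_def by auto
    have p: "precedes \<chi> u w" using rank_less_iff[OF proper uw(1,2)] uw(3,4) by simp
    have s: "colour_sequence \<chi> i = \<chi> u" "colour_sequence \<chi> (i + 1) = \<chi> w"
      using seq i unfolding u_def w_def by auto
    have "\<chi> u \<le> \<chi> w" using p by (auto simp: precedes_def)
    moreover have "\<chi> u < \<chi> w" if "i \<in> H_descents V E e k c (rank \<chi>)"
      using that H_descents_iff[OF \<pi>, of i] i precedes_same_colour_c_ascent[OF proper uw(1,2) _ p]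
        \<open>\<chi> u \<le> \<chi> w\<close> unfolding u_def w_def by fastforce
    ultimately show ?thesis using s by simp
  qed
  show ?thesis
    using pos content steps by (auto simp: compatible_def colour_sequence_def)
qed

lemma compatible_colouring:
  assumes \<pi>: "\<pi> \<in> labellings" and s: "s \<in> compatible \<alpha> \<pi>"
  shows "restrict (\<lambda>v. s (\<pi> v)) V \<in> colourings \<alpha>"
proof -
  have "proper_colouring E (restrict (\<lambda>v. s (\<pi> v)) V)"
    using compatible_proper[OF \<pi> s] edge_subset unfolding proper_colouring_def by fastforce
  moreover have "\<forall>v\<in>V. 1 \<le> s (\<pi> v)" using s labellingD(3)[OF \<pi>] by (auto simp: compatible_def)
  moreover have "card {v \<in> V. restrict (\<lambda>v. s (\<pi> v)) V v = a} = \<alpha> a" for a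
  proof -
    have "{v \<in> V. restrict (\<lambda>v. s (\<pi> v)) V v = a} = {v \<in> V. s (\<pi> v) = a}" by auto
    then show ?thesis
      using bij_betw_card_filter[of \<pi> V "{1..card V}" "\<lambda>i. s i = a"] \<pi> s
      by (simp add: labellings_def compatible_def)
  qed
  ultimately show ?thesis unfolding colourings_def by auto
qed

lemma finite_compatible: "finite (compatible \<alpha> \<pi>)"
proof (cases "compatible \<alpha> \<pi> = {}")
  case False
  then obtain s0 where s0: "s0 \<in> compatible \<alpha> \<pi>" by blast
  define A where "A = {a. 0 < \<alpha> a}"
  have "A \<subseteq> s0 ` {1..card V}"
  proof
    fix a assume "a \<in> A"
    then have "card {j \<in> {1..card V}. s0 j = a} \<noteq> 0" using s0 by (simp add: A_def compatible_def)
    then have "{j \<in> {1..card V}. s0 j = a} \<noteq> {}" by (metis card.empty)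
    then show "a \<in> s0 ` {1..card V}" by blast
  qed
  then have "finite A" using finite_surj by blast
  moreover have "compatible \<alpha> \<pi> \<subseteq> {1..card V} \<rightarrow>\<^sub>E A"
  proof
    fix s assume s: "s \<in> compatible \<alpha> \<pi>"
    have "s j \<in> A" if "j \<in> {1..card V}" for j
    proof -
      have "card {j' \<in> {1..card V}. s j' = s j} > 0" using that by (auto simp: card_gt_0_iff)
      then show ?thesis using s by (auto simp: A_def compatible_def)
    qed
    then show "s \<in> {1..card V} \<rightarrow>\<^sub>E A" using s by (auto simp: compatible_def)
  qed
  ultimately show ?thesis using finite_subset finite_PiE[of "{1..card V}" "\<lambda>_. A"] by auto
qed simp

lemma colour_sequence_restrict:
  assumes \<pi>: "\<pi> \<in> labellings" and s: "s \<in> compatible \<alpha> \<pi>"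
  shows "colour_sequence (restrict (\<lambda>v. s (\<pi> v)) V) = s"
proof (rule PiE_ext)
  show "s \<in> {1..card V} \<rightarrow>\<^sub>E UNIV" using s by (simp add: compatible_def)
  fix i assume "i \<in> {1..card V}"
  then show "colour_sequence (restrict (\<lambda>v. s (\<pi> v)) V) i = s i"
    using labellingD(5,6)[OF \<pi>] by (simp add: colour_sequence_def rank_compatible[OF \<pi> s])
qed (simp add: colour_sequence_def)

lemma restrict_colour_sequence:
  assumes \<chi>: "\<chi> \<in> colourings \<alpha>"
  shows "restrict (\<lambda>v. colour_sequence \<chi> (rank \<chi> v)) V = \<chi>"
proof (rule PiE_ext)
  show "\<chi> \<in> V \<rightarrow>\<^sub>E UNIV" using \<chi> by (simp add: colourings_def)
  have \<pi>: "rank \<chi> \<in> labellings" using \<chi> rank_labelling by (simp add: colourings_def)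
  fix v assume "v \<in> V"
  then show "restrict (\<lambda>v. colour_sequence \<chi> (rank \<chi> v)) V v = \<chi> v"
    using labellingD(3,4)[OF \<pi>] by (simp add: colour_sequence_def)
qed simp

text \<open>The pairs \<open>(\<pi>, s)\<close> correspond to proper colourings via \<open>\<chi> = s \<circ> \<pi>\<close>; the inverse recovers
  \<open>\<pi>\<close> as the rank of a vertex in the order \<open>precedes \<chi>\<close>.\<close>

lemma card_colourings: "card (colourings \<alpha>) = (\<Sum>\<pi>\<in>labellings. card (compatible \<alpha> \<pi>))"
proof -
  define \<phi> :: "('v \<Rightarrow> nat) \<times> (nat \<Rightarrow> nat) \<Rightarrow> 'v \<Rightarrow> nat"
    where "\<phi> = (\<lambda>(\<pi>, s). restrict (\<lambda>v. s (\<pi> v)) V)"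
  define \<psi> where "\<psi> = (\<lambda>\<chi>. (rank \<chi>, colour_sequence \<chi>))"
  have "bij_betw \<phi> (SIGMA \<pi>:labellings. compatible \<alpha> \<pi>) (colourings \<alpha>)"
  proof (rule bij_betw_byWitness[where f' = \<psi>])
    show "\<forall>p\<in>SIGMA \<pi>:labellings. compatible \<alpha> \<pi>. \<psi> (\<phi> p) = p"
      using rank_compatible colour_sequence_restrict by (auto simp: \<phi>_def \<psi>_def)
    show "\<forall>\<chi>\<in>colourings \<alpha>. \<phi> (\<psi> \<chi>) = \<chi>"
      using restrict_colour_sequence by (simp add: \<phi>_def \<psi>_def)
    show "\<phi> ` (SIGMA \<pi>:labellings. compatible \<alpha> \<pi>) \<subseteq> colourings \<alpha>"
      using compatible_colouring by (auto simp: \<phi>_def)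
    have "\<psi> \<chi> \<in> (SIGMA \<pi>:labellings. compatible \<alpha> \<pi>)" if "\<chi> \<in> colourings \<alpha>" for \<chi>
      using that colour_sequence_compatible rank_labelling by (simp add: \<psi>_def colourings_def)
    then show "\<psi> ` colourings \<alpha> \<subseteq> (SIGMA \<pi>:labellings. compatible \<alpha> \<pi>)" by blast
  qed
  then have "card (colourings \<alpha>) = card (SIGMA \<pi>:labellings. compatible \<alpha> \<pi>)"
    by (simp add: bij_betw_same_card)
  also have "\<dots> = (\<Sum>\<pi>\<in>labellings. card (compatible \<alpha> \<pi>))"
  proof (rule card_SigmaI)
    have "labellings \<subseteq> V \<rightarrow>\<^sub>E {1..card V}" by (auto simp: labellings_def)
    then show "finite labellings"
      using finite_V finite_subset finite_PiE[of V "\<lambda>_. {1..card V}"] by auto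
  qed (simp add: finite_compatible)
  finally show ?thesis .
qed

end

theorem theorem4p3:
  fixes V :: "'v set" and E :: "'v set set" and n k :: nat
    and e :: "nat \<Rightarrow> 'v set" and c :: "nat \<Rightarrow> 'v \<Rightarrow> 'v"
  assumes "hypertree V E"
    and "card V = n"
    and "\<forall>f\<in>E. prime (card f)"
    and "E = e ` {1..k}" and "inj_on e {1..k}"
    and "\<forall>i. 1 \<le> i \<and> i < k \<longrightarrow> card ((\<Union>j\<in>{1..i}. e j) \<inter> e (i+1)) = 1"
    and "\<forall>i\<in>{1..k}. cyclic_perm (c i) (e i)"
  shows "\<forall>\<alpha> :: nat \<Rightarrow> nat. X_coeff V E \<alpha> =
           (\<Sum>\<pi> \<in> {\<pi> \<in> V \<rightarrow>\<^sub>E {1..n}. bij_betw \<pi> V {1..n}}.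
               F_coeff n (H_descents V E e k c \<pi>) \<alpha>)"
proof
  fix \<alpha> :: "nat \<Rightarrow> nat"
  interpret prime_cyclic_hypertree V E e k c
    using assms(1,3,4,5,7) by unfold_locales
  have "X_coeff V E \<alpha> = card (colourings \<alpha>)"
    by (simp add: X_coeff_def colourings_def proper_colouring_def)
  also have "\<dots> = (\<Sum>\<pi>\<in>labellings. card (compatible \<alpha> \<pi>))"
    by (rule card_colourings)
  also have "\<dots> = (\<Sum>\<pi> \<in> {\<pi> \<in> V \<rightarrow>\<^sub>E {1..n}. bij_betw \<pi> V {1..n}}. F_coeff n (H_descents V E e k c \<pi>) \<alpha>)"
    by (simp add: labellings_def compatible_def F_coeff_def assms(2))
  finally show "X_coeff V E \<alpha> =
      (\<Sum>\<pi> \<in> {\<pi> \<in> V \<rightarrow>\<^sub>E {1..n}. bij_betw \<pi> V {1..n}}. F_coeff n (H_descents V E e k c \<pi>) \<alpha>)" .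
qed

end
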